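(* Assume $S\neq\emptyset$, let $k\ge\max(1,k_1,\dots,k_m)$, and suppose $\mathcal{Q}_k(\tilde G)$ is closed in $\mathbb{R}[\tilde X]_{2k}$. Then the affine hyperplane $M=\{(1,x):x\in\mathbb{R}^n\}\subseteq\mathbb{R}^{n+1}$ intersects the relative interior of $\pi(\mathcal{Q}_k(\tilde G)^* )$.
   Context: $X=(X_1,\dots,X_n)$, $\tilde X=(X_0,X_1,\dots,X_n)$; $\mathbb{R}[\tilde X]_{2k}$ is the space of polynomials of degree at most $2k$. For $f\in\mathbb{R}[X]$ of degree $d$, its homogenization is $\tilde f(\tilde X)=X_0^df(X/X_0)$. Fix $g_1,\dots,g_m\in\mathbb{R}[X]$, $S=\{x\in\mathbb{R}^n:g_j(x)\ge0,\ j=1,\dots,m\}$, $k_j=\lceil\deg g_j/2\rceil$. For a finite set $H=\{h_1,\dots,h_r\}$ of polynomials, the $k$-th quadratic module is $\mathcal{Q}_k(H)=\{\sum_{j=0}^r\sigma_jh_j:h_0=1,\ \sigma_j\text{ sums of squares of polynomials},\ \deg(\sigma_jh_j)\le2k\}$. Let $\tilde G=\{\tilde g_1,\dots,\tilde g_m,X_0,\|\tilde X\|_2^2-1,1-\|\tilde X\|_2^2\}$. Identify linear functionals on $\mathbb{R}[\tilde X]_{2k}$ with sequences $y=(y_\alpha)_{\alpha\in\mathbb{N}^{n+1},|\alpha|\le2k}$ via the Riesz functional $L_y(\sum_\alpha q_\alpha\tilde X^\alpha)=\sum_\alpha q_\alpha y_\alpha$. The dual cone is $\mathcal{Q}_k(\tilde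 G)^*=\{y:L_y(p)\ge0\ \forall p\in\mathcal{Q}_k(\tilde G)\}$, and $\pi(y)=(L_y(X_0),L_y(X_1),\dots,L_y(X_n))\in\mathbb{R}^{n+1}$ is the projection onto the dual of the space of linear forms. *)

theory Defs
  imports "HOL-Analysis.Analysis" "HOL-Library.Poly_Mapping"
begin

text \<open>Real polynomials in the variables indexed by a finite type 'v
  (the variables X_0, X_1, ..., X_n, with a distinguished index x0 playing the role of X_0),
  represented as finitely supported maps from exponent vectors (monomials) to coefficients.\<close>

type_synonym 'v rpoly = "('v \<Rightarrow>\<^sub>0 nat) \<Rightarrow>\<^sub>0 real"

definition mdeg :: "('v \<Rightarrow>\<^sub>0 nat) \<Rightarrow> nat" where
  "mdeg \<alpha> = (\<Sum>i\<in>Poly_Mapping.keys \<alpha>. Poly_Mapping.lookup \<alpha> i)"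

definition pdeg :: "'v rpoly \<Rightarrow> nat" where
  "pdeg p = Max (insert 0 (mdeg ` Poly_Mapping.keys p))"

definition pvar :: "'v \<Rightarrow> 'v rpoly" where
  "pvar i = Poly_Mapping.single (Poly_Mapping.single i 1) 1"

definition peval :: "'v rpoly \<Rightarrow> ('v \<Rightarrow> real) \<Rightarrow> real" where
  "peval p x = (\<Sum>\<alpha>\<in>Poly_Mapping.keys p. Poly_Mapping.lookup p \<alpha> * (\<Prod>i\<in>Poly_Mapping.keys \<alpha>. x i ^ Poly_Mapping.lookup \<alpha> i))"

text \<open>p does not involve the variable x0 (i.e. p lies in R[X] = R[X_1,...,X_n]).\<close>
definition free_of :: "'v \<Rightarrow> 'v rpoly \<Rightarrow> bool" where
  "free_of x0 p \<longleftrightarrow> (\<forall>\<alpha>\<in>Poly_Mapping.keys p. Poly_Mapping.lookup \<alpha> x0 = 0)"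

text \<open>Homogenization with respect to x0: X_0^d f(X/X_0), d = deg f.\<close>
definition homog :: "'v \<Rightarrow> 'v rpoly \<Rightarrow> 'v rpoly" where
  "homog x0 f = (\<Sum>\<alpha>\<in>Poly_Mapping.keys f. Poly_Mapping.single (\<alpha> + Poly_Mapping.single x0 (pdeg f - mdeg \<alpha>)) (Poly_Mapping.lookup f \<alpha>))"

definition sos :: "'v rpoly \<Rightarrow> bool" where
  "sos \<sigma> \<longleftrightarrow> (\<exists>qs. \<sigma> = sum_list (map (\<lambda>q. q * q) qs))"

definition polyspace :: "nat \<Rightarrow> 'v rpoly set" where
  "polyspace d = {p. pdeg p \<le> d}"

definition quadmod :: "nat \<Rightarrow> 'v rpoly list \<Rightarrow> 'v rpoly set" where
  "quadmod k hs = {p. \<exists>\<sigma>::nat \<Rightarrow> 'v rpoly.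
      (\<forall>j\<le>length hs. sos (\<sigma> j) \<and> pdeg (\<sigma> j * ((1 # hs) ! j)) \<le> 2 * k) \<and>
      p = (\<Sum>j\<le>length hs. \<sigma> j * ((1 # hs) ! j))}"

definition Gtilde :: "'v::finite \<Rightarrow> 'v rpoly list \<Rightarrow> 'v rpoly list" where
  "Gtilde x0 gs = map (homog x0) gs @
     [pvar x0, (\<Sum>i\<in>UNIV. pvar i * pvar i) - 1, 1 - (\<Sum>i\<in>UNIV. pvar i * pvar i)]"

definition riesz :: "(('v \<Rightarrow>\<^sub>0 nat) \<Rightarrow> real) \<Rightarrow> 'v rpoly \<Rightarrow> real" where
  "riesz y p = (\<Sum>\<alpha>\<in>Poly_Mapping.keys p. Poly_Mapping.lookup p \<alpha> * y \<alpha>)"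

text \<open>Dual cone of Q inside the dual of R[X~]_{2k}: sequences y = (y_\<alpha>)_{|\<alpha>|\<le>2k}
  (represented with y_\<alpha> = 0 for |\<alpha>| > 2k).\<close>
definition dualcone :: "nat \<Rightarrow> 'v rpoly set \<Rightarrow> (('v \<Rightarrow>\<^sub>0 nat) \<Rightarrow> real) set" where
  "dualcone d Q = {y. (\<forall>\<alpha>. d < mdeg \<alpha> \<longrightarrow> y \<alpha> = 0) \<and> (\<forall>p\<in>Q. 0 \<le> riesz y p)}"

definition proj_lin :: "(('v::finite \<Rightarrow>\<^sub>0 nat) \<Rightarrow> real) \<Rightarrow> real ^ 'v" where
  "proj_lin y = (\<chi> i. riesz y (pvar i))"

end

theory Submission imports Defs begin

text \<open>
  Pick a point x of the nonempty set S, replace its X_0-coordinate by 1 and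
  normalise the result to a point u of the unit sphere.  Then u_0 > 0, the homogenised
  constraints are nonnegative at u (they scale by a positive power of u_0 relative to
  g_j(x)), and the sphere constraints vanish, so every generator of G~ is nonnegative at u.
  Hence the truncated moment sequence of the point evaluation at u lies in the dual cone
  Q_k(G~)^*, and its projection is u itself, a vector with positive X_0-coordinate.
  The projection C of the dual cone is a convex cone; a convex cone containing a point
  with positive X_0-coordinate contains such a point in its relative interior (shrink
  towards a relative interior point), and rescaling makes this coordinate equal to 1.
\<close>

definition mon :: "('v::finite \<Rightarrow>\<^sub>0 nat) \<Rightarrow> ('v \<Rightarrow> real) \<Rightarrow> real" where
  "mon \<alpha> x = (\<Prod>i\<in>UNIV. x i ^ Poly_Mapping.lookup \<alpha> i)"

lemma mon_keys:
  "(\<Prod>i\<in>Poly_Mapping.keys \<alpha>. x i ^ Poly_Mapping.lookup \<alpha> i) = mon \<alpha> (x::'v::finite \<Rightarrow> real)"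
  unfolding mon_def by (rule prod.mono_neutral_left) (auto simp: in_keys_iff)

lemma mon_add: "mon (\<alpha> + \<beta>) x = mon \<alpha> x * mon \<beta> x"
  by (simp add: mon_def lookup_add power_add prod.distrib)

lemma mon_single: "mon (Poly_Mapping.single i m) u = u i ^ m"
proof -
  have "(\<Prod>j\<in>UNIV. u j ^ (if i = j then m else 0)) = (\<Prod>j\<in>UNIV. if i = j then u j ^ m else 1)"
    by (rule prod.cong) auto
  then show ?thesis by (simp add: mon_def lookup_single when_def)
qed

lemma mdeg_univ: "mdeg (\<alpha>::'v::finite \<Rightarrow>\<^sub>0 nat) = (\<Sum>i\<in>UNIV. Poly_Mapping.lookup \<alpha> i)"
  unfolding mdeg_def by (rule sum.mono_neutral_left) (auto simp: in_keys_iff)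

lemma mon_scale:
  fixes u :: "'v::finite \<Rightarrow> real"
  assumes "\<And>i. u i = w i / N"
  shows "mon \<alpha> u = mon \<alpha> w / N ^ mdeg \<alpha>"
  by (simp add: mon_def assms power_divide prod_dividef mdeg_univ power_sum)

lemma peval_super:
  assumes "finite A" "Poly_Mapping.keys p \<subseteq> A"
  shows "peval p (x::'v::finite \<Rightarrow> real) = (\<Sum>\<alpha>\<in>A. Poly_Mapping.lookup p \<alpha> * mon \<alpha> x)"
  unfolding peval_def mon_keys
  by (rule sum.mono_neutral_left) (use assms in \<open>auto simp: in_keys_iff\<close>)

lemmas peval_mon = peval_super[OF finite_keys order_refl]

lemma peval_add: "peval (p + q) (x::'v::finite \<Rightarrow> real) = peval p x + peval q x"
proof -
  let ?A = "Poly_Mapping.keys p \<union> Poly_Mapping.keys q"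
  have "peval (p + q) x = (\<Sum>\<alpha>\<in>?A. Poly_Mapping.lookup (p + q) \<alpha> * mon \<alpha> x)"
    by (rule peval_super) (use keys_add[of p q] in auto)
  also have "\<dots> = (\<Sum>\<alpha>\<in>?A. Poly_Mapping.lookup p \<alpha> * mon \<alpha> x)
                 + (\<Sum>\<alpha>\<in>?A. Poly_Mapping.lookup q \<alpha> * mon \<alpha> x)"
    by (simp add: lookup_add distrib_right sum.distrib)
  also have "\<dots> = peval p x + peval q x"
    by (simp add: peval_super[symmetric])
  finally show ?thesis .
qed

lemma peval_diff: "peval (p - q) (x::'v::finite \<Rightarrow> real) = peval p x - peval q x"
  using peval_add[of "p - q" q x] by simp

lemma peval_zero [simp]: "peval 0 x = 0"
  by (simp add: peval_def)

lemma peval_sum: "peval (\<Sum>j\<in>J. f j) (x::'v::finite \<Rightarrow> real) = (\<Sum>j\<in>J. peval (f j) x)"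
  by (induction J rule: infinite_finite_induct) (auto simp: peval_add)

lemma peval_single: "peval (Poly_Mapping.single \<beta> c) (x::'v::finite \<Rightarrow> real) = c * mon \<beta> x"
  by (simp add: peval_mon)

lemma poly_terms: "p = (\<Sum>\<alpha>\<in>Poly_Mapping.keys p. Poly_Mapping.single \<alpha> (Poly_Mapping.lookup p \<alpha>))"
proof (rule poly_mapping_eqI)
  fix \<beta>
  show "Poly_Mapping.lookup p \<beta> =
        Poly_Mapping.lookup (\<Sum>\<alpha>\<in>Poly_Mapping.keys p. Poly_Mapping.single \<alpha> (Poly_Mapping.lookup p \<alpha>)) \<beta>"
    by (cases "\<beta> \<in> Poly_Mapping.keys p")
       (auto simp: lookup_sum lookup_single when_def in_keys_iff sum.delta)
qed

lemma peval_mult: "peval (p * q) (x::'v::finite \<Rightarrow> real) = peval p x * peval q x"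
proof -
  have "p * q = (\<Sum>\<alpha>\<in>Poly_Mapping.keys p. \<Sum>\<beta>\<in>Poly_Mapping.keys q.
        Poly_Mapping.single (\<alpha> + \<beta>) (Poly_Mapping.lookup p \<alpha> * Poly_Mapping.lookup q \<beta>))"
    by (subst poly_terms[of p], subst poly_terms[of q]) (simp add: sum_product mult_single)
  then have "peval (p * q) x = (\<Sum>\<alpha>\<in>Poly_Mapping.keys p. \<Sum>\<beta>\<in>Poly_Mapping.keys q.
        Poly_Mapping.lookup p \<alpha> * Poly_Mapping.lookup q \<beta> * (mon \<alpha> x * mon \<beta> x))"
    by (simp add: peval_sum peval_single mon_add)
  also have "\<dots> = peval p x * peval q x"
    by (simp add: peval_mon sum_product mult_ac)
  finally show ?thesis .
qed

lemma peval_one [simp]: "peval 1 (x::'v::finite \<Rightarrow> real) = 1"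
  by (simp add: peval_mon mon_def)

lemma peval_pvar [simp]: "peval (pvar i) (x::'v::finite \<Rightarrow> real) = x i"
  by (simp add: pvar_def peval_single mon_single)

lemma sos_nonneg:
  assumes "sos s"
  shows "0 \<le> peval s (x::'v::finite \<Rightarrow> real)"
proof -
  obtain qs where "s = sum_list (map (\<lambda>q. q * q) qs)" using assms by (auto simp: sos_def)
  moreover have "0 \<le> peval (sum_list (map (\<lambda>q. q * q) qs)) x"
    by (induction qs) (auto simp: peval_add peval_mult)
  ultimately show ?thesis by simp
qed

lemma peval_free:
  assumes "free_of x0 g"
  shows "peval g (x(x0 := c)) = peval g (x::'v::finite \<Rightarrow> real)"
  unfolding peval_mon
proof (rule sum.cong)
  fix \<alpha> assume "\<alpha> \<in> Poly_Mapping.keys g"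
  then have "Poly_Mapping.lookup \<alpha> x0 = 0" using assms by (auto simp: free_of_def)
  then have "mon \<alpha> (x(x0 := c)) = mon \<alpha> x"
    unfolding mon_def by (intro prod.cong) auto
  then show "Poly_Mapping.lookup g \<alpha> * mon \<alpha> (x(x0 := c)) = Poly_Mapping.lookup g \<alpha> * mon \<alpha> x"
    by simp
qed simp

lemma pdeg_le_iff: "pdeg p \<le> d \<longleftrightarrow> (\<forall>\<alpha>\<in>Poly_Mapping.keys p. mdeg \<alpha> \<le> d)"
  unfolding pdeg_def by (simp add: Max_le_iff)

lemma pdeg_sum_le: "(\<And>j. j \<in> J \<Longrightarrow> pdeg (f j) \<le> d) \<Longrightarrow> pdeg (\<Sum>j\<in>J. f j) \<le> d"
proof (induction J rule: infinite_finite_induct)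
  case (insert j J)
  then show ?case using keys_add[of "f j" "sum f J"] by (auto simp: pdeg_le_iff)
qed (auto simp: pdeg_def)

lemma pdeg_pvar: "pdeg (pvar i) = 1"
  by (simp add: pdeg_def pvar_def mdeg_def)

lemma peval_homog:
  fixes x0 :: "'v::finite"
  assumes u: "\<And>i. u i = w i / N" and "w x0 = 1"
  shows "peval (homog x0 g) u = (1/N) ^ pdeg g * peval g w"
proof -
  have u0: "u x0 = 1/N" using assms by simp
  have "peval (homog x0 g) u = (\<Sum>\<alpha>\<in>Poly_Mapping.keys g.
          Poly_Mapping.lookup g \<alpha> * (mon \<alpha> u * u x0 ^ (pdeg g - mdeg \<alpha>)))"
    by (simp add: homog_def peval_sum peval_single mon_add mon_single)
  also have "\<dots> = (\<Sum>\<alpha>\<in>Poly_Mapping.keys g. (1/N) ^ pdeg g * (Poly_Mapping.lookup g \<alpha> * mon \<alpha> w))"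
  proof (rule sum.cong)
    fix \<alpha> assume "\<alpha> \<in> Poly_Mapping.keys g"
    then have le: "mdeg \<alpha> \<le> pdeg g" using pdeg_le_iff by blast
    have "mon \<alpha> u * u x0 ^ (pdeg g - mdeg \<alpha>)
          = mon \<alpha> w * ((1/N) ^ mdeg \<alpha> * (1/N) ^ (pdeg g - mdeg \<alpha>))"
      by (simp add: mon_scale[OF u] u0 power_one_over)
    also have "\<dots> = mon \<alpha> w * (1/N) ^ pdeg g"
      using le by (simp add: power_add[symmetric])
    finally show "Poly_Mapping.lookup g \<alpha> * (mon \<alpha> u * u x0 ^ (pdeg g - mdeg \<alpha>)) =
        (1/N) ^ pdeg g * (Poly_Mapping.lookup g \<alpha> * mon \<alpha> w)" by simp
  qed simp
  also have "\<dots> = (1/N) ^ pdeg g * peval g w"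
    by (simp add: peval_mon sum_distrib_left)
  finally show ?thesis .
qed

section \<open>Moment sequences of point evaluations\<close>

text \<open>The moments of degree at most d of the Dirac measure at u.\<close>
definition point_moments :: "nat \<Rightarrow> ('v::finite \<Rightarrow> real) \<Rightarrow> ('v \<Rightarrow>\<^sub>0 nat) \<Rightarrow> real" where
  "point_moments d u \<alpha> = (if mdeg \<alpha> \<le> d then mon \<alpha> u else 0)"

lemma riesz_point_moments:
  assumes "pdeg p \<le> d"
  shows "riesz (point_moments d u) p = peval p u"
  unfolding riesz_def peval_mon
  by (rule sum.cong) (use assms in \<open>auto simp: pdeg_le_iff point_moments_def\<close>)

lemma point_moments_in_dualcone:
  fixes u :: "'v::finite \<Rightarrow> real"
  assumes nonneg: "\<forall>h\<in>set hs. 0 \<le> peval h u"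
  shows "point_moments (2 * k) u \<in> dualcone (2 * k) (quadmod k hs)"
  unfolding dualcone_def
proof (intro CollectI conjI allI impI ballI)
  fix \<alpha> :: "'v \<Rightarrow>\<^sub>0 nat" assume "2 * k < mdeg \<alpha>"
  then show "point_moments (2 * k) u \<alpha> = 0" by (simp add: point_moments_def)
next
  fix p assume "p \<in> quadmod k hs"
  then obtain \<sigma> where \<sigma>: "\<forall>j\<le>length hs. sos (\<sigma> j) \<and> pdeg (\<sigma> j * ((1 # hs) ! j)) \<le> 2 * k"
    and p: "p = (\<Sum>j\<le>length hs. \<sigma> j * ((1 # hs) ! j))"
    by (auto simp: quadmod_def)
  have "pdeg p \<le> 2 * k" unfolding p by (rule pdeg_sum_le) (use \<sigma> in auto)
  then have "riesz (point_moments (2 * k) u) p = peval p u" by (rule riesz_point_moments)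
  also have "\<dots> = (\<Sum>j\<le>length hs. peval (\<sigma> j) u * peval ((1 # hs) ! j) u)"
    by (simp add: p peval_sum peval_mult)
  also have "\<dots> \<ge> 0"
  proof (rule sum_nonneg)
    fix j assume j: "j \<in> {..length hs}"
    have "0 \<le> peval ((1 # hs) ! j) u"
      using nonneg nth_mem[of j "1 # hs"] j by (auto simp del: nth_Cons_Suc)
    moreover have "0 \<le> peval (\<sigma> j) u" using \<sigma> j sos_nonneg by auto
    ultimately show "0 \<le> peval (\<sigma> j) u * peval ((1 # hs) ! j) u" by simp
  qed
  finally show "0 \<le> riesz (point_moments (2 * k) u) p" .
qed

lemma proj_lin_point_moments:
  assumes "1 \<le> d"
  shows "proj_lin (point_moments d u) = (\<chi> i. u i)"
  using assms by (simp add: proj_lin_def riesz_point_moments pdeg_pvar vec_eq_iff)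

section \<open>Lifting a point of S to the sphere\<close>

lemma Gtilde_nonneg_point:
  fixes x0 :: "'v::finite"
  assumes free: "\<forall>g\<in>set gs. free_of x0 g"
    and x: "\<forall>g\<in>set gs. 0 \<le> peval g x"
  obtains u where "u x0 > 0" "\<forall>h\<in>set (Gtilde x0 gs). 0 \<le> peval h u"
proof -
  define w where "w = x(x0 := 1)"
  define N where "N = sqrt (\<Sum>i\<in>UNIV. w i ^ 2)"
  define u where "u i = w i / N" for i
  have "1 \<le> (\<Sum>i\<in>UNIV. w i ^ 2)"
    using member_le_sum[of x0 UNIV "\<lambda>i. w i ^ 2"] by (simp add: w_def)
  then have N: "N > 0" "N ^ 2 = (\<Sum>i\<in>UNIV. w i ^ 2)" by (auto simp: N_def)
  have u0: "u x0 > 0" using N by (simp add: u_def w_def)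
  have "peval (\<Sum>i\<in>UNIV. pvar i * pvar i) u = (\<Sum>i\<in>UNIV. u i ^ 2)"
    by (simp add: peval_sum peval_mult power2_eq_square)
  also have "\<dots> = (\<Sum>i\<in>UNIV. w i ^ 2) / N ^ 2"
    by (simp add: u_def power_divide sum_divide_distrib)
  finally have sphere: "peval (\<Sum>i\<in>UNIV. pvar i * pvar i) u = 1"
    using N(1) by (simp add: N(2)[symmetric])
  have homog: "0 \<le> peval (homog x0 g) u" if "g \<in> set gs" for g
  proof -
    have "peval (homog x0 g) u = (1/N) ^ pdeg g * peval g w"
      by (rule peval_homog) (simp_all add: u_def w_def)
    also have "peval g w = peval g x" unfolding w_def using free that by (simp add: peval_free)
    finally show ?thesis using x that N by simp
  qed
  have "\<forall>h\<in>set (Gtilde x0 gs). 0 \<le> peval h u"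
    using homog u0 by (auto simp: Gtilde_def peval_diff sphere)
  with u0 show thesis by (rule that)
qed

section \<open>Relative interiors of convex cones\<close>

lemma convex_cone_rel_interior_level:
  fixes C :: "'a::euclidean_space set"
  assumes "convex C" "cone C" "p \<in> C" "b \<bullet> p > 0"
  shows "{z. b \<bullet> z = 1} \<inter> rel_interior C \<noteq> {}"
proof -
  obtain a where a: "a \<in> rel_interior C"
    using assms rel_interior_eq_empty by blast
  define e where "e = (b \<bullet> p) / (2 * (b \<bullet> p + \<bar>b \<bullet> a\<bar>))"
  have e: "0 < e" "e \<le> 1" "e * (b \<bullet> p + \<bar>b \<bullet> a\<bar>) = (b \<bullet> p) / 2"
    using assms(4) by (auto simp: e_def divide_le_eq field_simps)
  define z where "z = p - e *\<^sub>R (p - a)"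
  have z: "z \<in> rel_interior C" unfolding z_def
    by (rule rel_interior_closure_convex_shrink[OF assms(1) a])
       (use assms(3) closure_subset e in auto)
  have "e * (b \<bullet> p - b \<bullet> a) \<le> e * (b \<bullet> p + \<bar>b \<bullet> a\<bar>)"
    using e(1) by (intro mult_left_mono) auto
  then have bz: "b \<bullet> z > 0" using e(3) assms(4) by (simp add: z_def inner_diff_right)
  have "(1 / (b \<bullet> z)) *\<^sub>R z \<in> {0} \<union> rel_interior C"
    using cone_rel_interior[OF assms(2)] z bz by (intro mem_cone) auto
  moreover have "b \<bullet> ((1 / (b \<bullet> z)) *\<^sub>R z) = 1" using bz by simp
  ultimately show ?thesis by force
qed

lemma riesz_comb: "riesz (\<lambda>\<alpha>. a * y1 \<alpha> + b * y2 \<alpha>) p = a * riesz y1 p + b * riesz y2 p"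
  by (simp add: riesz_def sum.distrib sum_distrib_left algebra_simps)

lemma dualcone_comb:
  assumes "y1 \<in> dualcone d Q" "y2 \<in> dualcone d Q" "0 \<le> a" "0 \<le> b"
  shows "(\<lambda>\<alpha>. a * y1 \<alpha> + b * y2 \<alpha>) \<in> dualcone d Q"
  using assms by (auto simp: dualcone_def riesz_comb)

lemma proj_lin_comb:
  "proj_lin (\<lambda>\<alpha>. a * y1 \<alpha> + b * y2 \<alpha>) = a *\<^sub>R proj_lin y1 + b *\<^sub>R proj_lin y2"
  by (simp add: proj_lin_def vec_eq_iff riesz_comb)

lemma convex_proj_dualcone: "convex (proj_lin ` dualcone d Q)"
proof (rule convexI)
  fix z1 z2 and a b :: real
  assume z: "z1 \<in> proj_lin ` dualcone d Q" "z2 \<in> proj_lin ` dualcone d Q"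
    and ab: "0 \<le> a" "0 \<le> b"
  obtain y1 where y1: "y1 \<in> dualcone d Q" "z1 = proj_lin y1" using z(1) by blast
  obtain y2 where y2: "y2 \<in> dualcone d Q" "z2 = proj_lin y2" using z(2) by blast
  have "(\<lambda>\<alpha>. a * y1 \<alpha> + b * y2 \<alpha>) \<in> dualcone d Q"
    by (rule dualcone_comb[OF y1(1) y2(1) ab])
  then have "proj_lin (\<lambda>\<alpha>. a * y1 \<alpha> + b * y2 \<alpha>) \<in> proj_lin ` dualcone d Q"
    by (rule imageI)
  then show "a *\<^sub>R z1 + b *\<^sub>R z2 \<in> proj_lin ` dualcone d Q"
    by (simp add: y1(2) y2(2) proj_lin_comb)
qed

lemma cone_proj_dualcone: "cone (proj_lin ` dualcone d Q)"
  unfolding cone_def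
proof (intro ballI allI impI)
  fix z and c :: real
  assume z: "z \<in> proj_lin ` dualcone d Q" and c: "0 \<le> c"
  obtain y where y: "y \<in> dualcone d Q" "z = proj_lin y" using z by blast
  have "(\<lambda>\<alpha>. c * y \<alpha> + 0 * y \<alpha>) \<in> dualcone d Q"
    by (rule dualcone_comb[OF y(1) y(1) c order_refl])
  then have "proj_lin (\<lambda>\<alpha>. c * y \<alpha> + 0 * y \<alpha>) \<in> proj_lin ` dualcone d Q"
    by (rule imageI)
  then show "c *\<^sub>R z \<in> proj_lin ` dualcone d Q"
    unfolding proj_lin_comb y(2) by simp
qed

theorem mainTheorem12:
  fixes x0 :: "'v::finite"
    and gs :: "'v rpoly list"
    and k :: nat
  assumes gs_in_X: "\<forall>g\<in>set gs. free_of x0 g"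
    and S_nonempty: "\<exists>x::'v \<Rightarrow> real. \<forall>g\<in>set gs. 0 \<le> peval g x"
    and k_ge1: "1 \<le> k"
    and k_ge: "\<forall>g\<in>set gs. nat \<lceil>real (pdeg g) / 2\<rceil> \<le> k"
    and closed: "closedin (top_of_set (Poly_Mapping.lookup ` polyspace (2 * k)))
                   (Poly_Mapping.lookup ` quadmod k (Gtilde x0 gs))"
  shows "{z::real ^ 'v. z $ x0 = 1}
           \<inter> rel_interior (proj_lin ` dualcone (2 * k) (quadmod k (Gtilde x0 gs))) \<noteq> {}"
proof -
  let ?C = "proj_lin ` dualcone (2 * k) (quadmod k (Gtilde x0 gs))"
  obtain u where u0: "u x0 > 0" and u: "\<forall>h\<in>set (Gtilde x0 gs). 0 \<le> peval h u"
    using Gtilde_nonneg_point[OF gs_in_X] S_nonempty by blast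
  have "proj_lin (point_moments (2 * k) u) \<in> ?C"
    using point_moments_in_dualcone[OF u] by (rule imageI)
  then have "(\<chi> i. u i) \<in> ?C" using k_ge1 by (simp add: proj_lin_point_moments)
  moreover have "axis x0 1 \<bullet> (\<chi> i. u i) > 0" using u0 by (simp add: inner_axis')
  ultimately have "{z. axis x0 1 \<bullet> z = 1} \<inter> rel_interior ?C \<noteq> {}"
    by (rule convex_cone_rel_interior_level[OF convex_proj_dualcone cone_proj_dualcone])
  then show ?thesis by (simp add: inner_axis')
qed

end
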